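(* Let $\mathcal{E}$ and $\mathcal{S}$ be extensive categories with finite products and let $R : \mathcal{S} \to \mathcal{E}$ be a functor preserving finite coproducts. Suppose $R$ has a left adjoint $L : \mathcal{E}\to\mathcal{S}$ that preserves finite products, and that $R$ is closed under subobjects. Then for every decidable object $X$ of $\mathcal{E}$, the unit $X \to R(LX)$ is an isomorphism.
   Context: Extensive category: a category with finite coproducts such that $\mathcal{E}/X \times \mathcal{E}/Y \to \mathcal{E}/(X+Y)$ is an equivalence for all $X,Y$. A summand is a map $X\to Z$ for which there is $Y\to Z$ making $X\to Z\leftarrow Y$ a coproduct. An object $X$ is decidable if its diagonal $X\to X\times X$ is a summand. For an adjunction $L\dashv R : \mathcal{S}\to\mathcal{E}$, the right adjoint $R$ is said to be closed under subobjects if for every $A$ in $\mathcal{S}$ and every monomorphism $X \to RA$ in $\mathcal{E}$, the unit $X \to R(LX)$ is an isomorphism. *)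

theory Defs
  imports Main
begin

text \<open>A minimal, self-contained rendering of (locally small, set-based) categories.
  A category has a set of objects, hom-sets, a composition (Comp C g f is g after f)
  and identities.\<close>

record ('o, 'a) category =
  Ob   :: "'o set"
  Hom  :: "'o \<Rightarrow> 'o \<Rightarrow> 'a set"
  Comp :: "'a \<Rightarrow> 'a \<Rightarrow> 'a"
  Idt  :: "'o \<Rightarrow> 'a"

abbreviation arr :: "('o, 'a) category \<Rightarrow> 'a \<Rightarrow> 'o \<Rightarrow> 'o \<Rightarrow> bool" where
  "arr C f A B \<equiv> f \<in> Hom C A B"

definition is_category :: "('o, 'a) category \<Rightarrow> bool" where
  "is_category C \<longleftrightarrow>
     (\<forall>A B f. arr C f A B \<longrightarrow> A \<in> Ob C \<and> B \<in> Ob C) \<and>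
     (\<forall>A B A' B' f. arr C f A B \<longrightarrow> arr C f A' B' \<longrightarrow> A = A' \<and> B = B') \<and>
     (\<forall>A \<in> Ob C. arr C (Idt C A) A A) \<and>
     (\<forall>A B D f g. arr C f A B \<longrightarrow> arr C g B D \<longrightarrow> arr C (Comp C g f) A D) \<and>
     (\<forall>A B f. arr C f A B \<longrightarrow> Comp C (Idt C B) f = f \<and> Comp C f (Idt C A) = f) \<and>
     (\<forall>A B D E f g h. arr C f A B \<longrightarrow> arr C g B D \<longrightarrow> arr C h D E \<longrightarrow>
        Comp C h (Comp C g f) = Comp C (Comp C h g) f)"

definition iso :: "('o, 'a) category \<Rightarrow> 'a \<Rightarrow> 'o \<Rightarrow> 'o \<Rightarrow> bool" where
  "iso C f A B \<longleftrightarrow> arr C f A B \<and>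
     (\<exists>g. arr C g B A \<and> Comp C g f = Idt C A \<and> Comp C f g = Idt C B)"

definition mono :: "('o, 'a) category \<Rightarrow> 'a \<Rightarrow> 'o \<Rightarrow> 'o \<Rightarrow> bool" where
  "mono C m A B \<longleftrightarrow> arr C m A B \<and>
     (\<forall>T g h. arr C g T A \<longrightarrow> arr C h T A \<longrightarrow> Comp C m g = Comp C m h \<longrightarrow> g = h)"

definition initial :: "('o, 'a) category \<Rightarrow> 'o \<Rightarrow> bool" where
  "initial C I \<longleftrightarrow> I \<in> Ob C \<and> (\<forall>A \<in> Ob C. \<exists>!f. arr C f I A)"

definition terminal :: "('o, 'a) category \<Rightarrow> 'o \<Rightarrow> bool" where
  "terminal C T \<longleftrightarrow> T \<in> Ob C \<and> (\<forall>A \<in> Ob C. \<exists>!f. arr C f A T)"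

definition is_coproduct :: "('o, 'a) category \<Rightarrow> 'o \<Rightarrow> 'o \<Rightarrow> 'o \<Rightarrow> 'a \<Rightarrow> 'a \<Rightarrow> bool" where
  "is_coproduct C X Y Z i j \<longleftrightarrow> arr C i X Z \<and> arr C j Y Z \<and>
     (\<forall>W f g. arr C f X W \<longrightarrow> arr C g Y W \<longrightarrow>
        (\<exists>!h. arr C h Z W \<and> Comp C h i = f \<and> Comp C h j = g))"

definition is_product :: "('o, 'a) category \<Rightarrow> 'o \<Rightarrow> 'o \<Rightarrow> 'o \<Rightarrow> 'a \<Rightarrow> 'a \<Rightarrow> bool" where
  "is_product C X Y P p q \<longleftrightarrow> arr C p P X \<and> arr C q P Y \<and>
     (\<forall>W f g. arr C f W X \<longrightarrow> arr C g W Y \<longrightarrow>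
        (\<exists>!h. arr C h W P \<and> Comp C p h = f \<and> Comp C q h = g))"

definition has_finite_coproducts :: "('o, 'a) category \<Rightarrow> bool" where
  "has_finite_coproducts C \<longleftrightarrow> (\<exists>I. initial C I) \<and>
     (\<forall>X \<in> Ob C. \<forall>Y \<in> Ob C. \<exists>Z i j. is_coproduct C X Y Z i j)"

definition has_finite_products :: "('o, 'a) category \<Rightarrow> bool" where
  "has_finite_products C \<longleftrightarrow> (\<exists>T. terminal C T) \<and>
     (\<forall>X \<in> Ob C. \<forall>Y \<in> Ob C. \<exists>P p q. is_product C X Y P p q)"

text \<open>Given a coproduct diagram X --iX--> Z <--iY-- Y, the functor
  C/X x C/Y --> C/Z sends (a : A -> X, b : B -> Y) to the induced arrow
  c : A+B -> Z with c o u = iX o a, c o v = iY o b (for a coproduct A --u--> A+B <--v-- B),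
  and a pair of slice morphisms (f,g) to f+g.  The choice of coproducts is
  immaterial, so we quantify over all coproduct diagrams.  Equivalence of
  categories = essentially surjective + fully faithful.\<close>

definition coprod_functor_ess_surj ::
  "('o, 'a) category \<Rightarrow> 'o \<Rightarrow> 'o \<Rightarrow> 'o \<Rightarrow> 'a \<Rightarrow> 'a \<Rightarrow> bool" where
  "coprod_functor_ess_surj C X Y Z iX iY \<longleftrightarrow>
     (\<forall>W c. arr C c W Z \<longrightarrow>
        (\<exists>A B a b V u v c' k. arr C a A X \<and> arr C b B Y \<and> is_coproduct C A B V u v \<and>
           arr C c' V Z \<and> Comp C c' u = Comp C iX a \<and> Comp C c' v = Comp C iY b \<and>
           iso C k V W \<and> Comp C c k = c'))"

definition coprod_functor_fully_faithful ::
  "('o, 'a) category \<Rightarrow> 'o \<Rightarrow> 'o \<Rightarrow> 'o \<Rightarrow> 'a \<Rightarrow> 'a \<Rightarrow> bool" where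
  "coprod_functor_fully_faithful C X Y Z iX iY \<longleftrightarrow>
     (\<forall>A B a b W u v c A' B' a' b' W' u' v' c' h.
        arr C a A X \<longrightarrow> arr C b B Y \<longrightarrow> is_coproduct C A B W u v \<longrightarrow>
        arr C c W Z \<longrightarrow> Comp C c u = Comp C iX a \<longrightarrow> Comp C c v = Comp C iY b \<longrightarrow>
        arr C a' A' X \<longrightarrow> arr C b' B' Y \<longrightarrow> is_coproduct C A' B' W' u' v' \<longrightarrow>
        arr C c' W' Z \<longrightarrow> Comp C c' u' = Comp C iX a' \<longrightarrow> Comp C c' v' = Comp C iY b' \<longrightarrow>
        arr C h W W' \<longrightarrow> Comp C c' h = c \<longrightarrow>
        (\<exists>!fg. arr C (fst fg) A A' \<and> Comp C a' (fst fg) = a \<and>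
               arr C (snd fg) B B' \<and> Comp C b' (snd fg) = b \<and>
               Comp C h u = Comp C u' (fst fg) \<and> Comp C h v = Comp C v' (snd fg)))"

definition extensive :: "('o, 'a) category \<Rightarrow> bool" where
  "extensive C \<longleftrightarrow> is_category C \<and> has_finite_coproducts C \<and>
     (\<forall>X Y Z iX iY. is_coproduct C X Y Z iX iY \<longrightarrow>
        coprod_functor_ess_surj C X Y Z iX iY \<and> coprod_functor_fully_faithful C X Y Z iX iY)"

definition summand :: "('o, 'a) category \<Rightarrow> 'a \<Rightarrow> 'o \<Rightarrow> 'o \<Rightarrow> bool" where
  "summand C m X Z \<longleftrightarrow> (\<exists>Y n. is_coproduct C X Y Z m n)"

text \<open>X is decidable: its diagonal into (a) product X x X is a summand
  (independent of the choice of product).\<close>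
definition decidable_obj :: "('o, 'a) category \<Rightarrow> 'o \<Rightarrow> bool" where
  "decidable_obj C X \<longleftrightarrow> X \<in> Ob C \<and>
     (\<exists>P p q d. is_product C X X P p q \<and> arr C d X P \<and>
        Comp C p d = Idt C X \<and> Comp C q d = Idt C X \<and> summand C d X P)"

definition is_functor :: "('o, 'a) category \<Rightarrow> ('p, 'b) category \<Rightarrow>
    ('o \<Rightarrow> 'p) \<Rightarrow> ('a \<Rightarrow> 'b) \<Rightarrow> bool" where
  "is_functor C D Fo Fa \<longleftrightarrow>
     (\<forall>A \<in> Ob C. Fo A \<in> Ob D) \<and>
     (\<forall>A B f. arr C f A B \<longrightarrow> arr D (Fa f) (Fo A) (Fo B)) \<and>
     (\<forall>A \<in> Ob C. Fa (Idt C A) = Idt D (Fo A)) \<and>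
     (\<forall>A B E f g. arr C f A B \<longrightarrow> arr C g B E \<longrightarrow> Fa (Comp C g f) = Comp D (Fa g) (Fa f))"

definition preserves_finite_coproducts :: "('o, 'a) category \<Rightarrow> ('p, 'b) category \<Rightarrow>
    ('o \<Rightarrow> 'p) \<Rightarrow> ('a \<Rightarrow> 'b) \<Rightarrow> bool" where
  "preserves_finite_coproducts C D Fo Fa \<longleftrightarrow>
     (\<forall>I. initial C I \<longrightarrow> initial D (Fo I)) \<and>
     (\<forall>X Y Z i j. is_coproduct C X Y Z i j \<longrightarrow> is_coproduct D (Fo X) (Fo Y) (Fo Z) (Fa i) (Fa j))"

definition preserves_finite_products :: "('o, 'a) category \<Rightarrow> ('p, 'b) category \<Rightarrow>
    ('o \<Rightarrow> 'p) \<Rightarrow> ('a \<Rightarrow> 'b) \<Rightarrow> bool" where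
  "preserves_finite_products C D Fo Fa \<longleftrightarrow>
     (\<forall>T. terminal C T \<longrightarrow> terminal D (Fo T)) \<and>
     (\<forall>X Y P p q. is_product C X Y P p q \<longrightarrow> is_product D (Fo X) (Fo Y) (Fo P) (Fa p) (Fa q))"

text \<open>L -| R : S -> E with unit eta, given by the universal property of the unit
  (eta a natural transformation Id => R L, universal from each X to R).\<close>
definition is_adjunction :: "('o, 'a) category \<Rightarrow> ('p, 'b) category \<Rightarrow>
    ('o \<Rightarrow> 'p) \<Rightarrow> ('a \<Rightarrow> 'b) \<Rightarrow> ('p \<Rightarrow> 'o) \<Rightarrow> ('b \<Rightarrow> 'a) \<Rightarrow> ('o \<Rightarrow> 'a) \<Rightarrow> bool" where
  "is_adjunction E S Lo La Ro Ra \<eta> \<longleftrightarrow>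
     is_functor E S Lo La \<and> is_functor S E Ro Ra \<and>
     (\<forall>X \<in> Ob E. arr E (\<eta> X) X (Ro (Lo X))) \<and>
     (\<forall>X Y f. arr E f X Y \<longrightarrow> Comp E (Ra (La f)) (\<eta> X) = Comp E (\<eta> Y) f) \<and>
     (\<forall>X \<in> Ob E. \<forall>A \<in> Ob S. \<forall>f. arr E f X (Ro A) \<longrightarrow>
        (\<exists>!g. arr S g (Lo X) A \<and> Comp E (Ra g) (\<eta> X) = f))"

definition closed_under_subobjects :: "('o, 'a) category \<Rightarrow> ('p, 'b) category \<Rightarrow>
    ('o \<Rightarrow> 'p) \<Rightarrow> ('p \<Rightarrow> 'o) \<Rightarrow> ('o \<Rightarrow> 'a) \<Rightarrow> bool" where
  "closed_under_subobjects E S Lo Ro \<eta> \<longleftrightarrow>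
     (\<forall>A \<in> Ob S. \<forall>X m. mono E m X (Ro A) \<longrightarrow> iso E (\<eta> X) X (Ro (Lo X)))"

end

theory Submission
  imports Defs
begin

text \<open>Since \<open>R\<close> is closed under subobjects, it suffices that the unit \<open>\<eta>\<^sub>X\<close> is mono.
  Let \<open>g, h : T \<rightarrow> X\<close> with \<open>\<eta>\<^sub>X g = \<eta>\<^sub>X h\<close>, let \<open>P = X \<times> X\<close> with diagonal \<open>\<delta>\<close> and
  \<open>k = \<langle>g, h\<rangle> : T \<rightarrow> P\<close>. Because \<open>L\<close> preserves products, \<open>RL\<close> sends the projections to
  jointly monic arrows, whence \<open>\<eta>\<^sub>P k = RL(\<delta>) \<eta>\<^sub>X g\<close>. Decidability writes \<open>P = X + Y\<close> with
  \<open>\<delta>\<close> the first injection, and \<open>RL\<close> preserves this coproduct. Any \<open>B \<rightarrow> T\<close> whose composite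
  with \<open>k\<close> factors through \<open>Y\<close> thus maps compatibly into both summands of \<open>RLX + RLY\<close>, so
  \<open>B\<close> is initial since coproducts in an extensive category are disjoint. Splitting \<open>T\<close>
  along \<open>k\<close> by extensivity, \<open>k\<close> factors through \<open>\<delta>\<close>, and therefore \<open>g = h\<close>.\<close>

lemma cat_dom: "is_category C \<Longrightarrow> arr C f A B \<Longrightarrow> A \<in> Ob C"
  unfolding is_category_def by meson

lemma cat_cod: "is_category C \<Longrightarrow> arr C f A B \<Longrightarrow> B \<in> Ob C"
  unfolding is_category_def by meson

lemma cat_id: "is_category C \<Longrightarrow> A \<in> Ob C \<Longrightarrow> arr C (Idt C A) A A"
  unfolding is_category_def by meson

lemma cat_comp: "is_category C \<Longrightarrow> arr C f A B \<Longrightarrow> arr C g B D \<Longrightarrow> arr C (Comp C g f) A D"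
  unfolding is_category_def by meson

lemma cat_idl: "is_category C \<Longrightarrow> arr C f A B \<Longrightarrow> Comp C (Idt C B) f = f"
  unfolding is_category_def by meson

lemma cat_idr: "is_category C \<Longrightarrow> arr C f A B \<Longrightarrow> Comp C f (Idt C A) = f"
  unfolding is_category_def by meson

lemma cat_assoc:
  "is_category C \<Longrightarrow> arr C f A B \<Longrightarrow> arr C g B D \<Longrightarrow> arr C h D F \<Longrightarrow>
    Comp C h (Comp C g f) = Comp C (Comp C h g) f"
  unfolding is_category_def by meson

lemma initial_arr_exists: "initial C I \<Longrightarrow> A \<in> Ob C \<Longrightarrow> \<exists>f. arr C f I A"
  unfolding initial_def by blast

lemma initial_arr_unique:
  assumes "is_category C" "initial C I" "arr C f I A" "arr C g I A"
  shows "f = g"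
  using assms(2-4) cat_cod[OF assms(1,3)] unfolding initial_def by blast

lemma coproduct_arr_eqI:
  assumes c: "is_category C" and cp: "is_coproduct C X Y Z i j"
    and h1: "arr C h1 Z W" and h2: "arr C h2 Z W"
    and "Comp C h1 i = Comp C h2 i" "Comp C h1 j = Comp C h2 j"
  shows "h1 = h2"
proof -
  have i: "arr C i X Z" and j: "arr C j Y Z" using cp unfolding is_coproduct_def by auto
  have "\<exists>!h. arr C h Z W \<and> Comp C h i = Comp C h1 i \<and> Comp C h j = Comp C h1 j"
    using cp cat_comp[OF c i h1] cat_comp[OF c j h1] unfolding is_coproduct_def by blast
  then show ?thesis using assms by metis
qed

lemma product_arr_eqI:
  assumes c: "is_category C" and pr: "is_product C X Y P p q"
    and h1: "arr C h1 W P" and h2: "arr C h2 W P"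
    and "Comp C p h1 = Comp C p h2" "Comp C q h1 = Comp C q h2"
  shows "h1 = h2"
proof -
  have p: "arr C p P X" and q: "arr C q P Y" using pr unfolding is_product_def by auto
  have "\<exists>!h. arr C h W P \<and> Comp C p h = Comp C p h1 \<and> Comp C q h = Comp C q h1"
    using pr cat_comp[OF c h1 p] cat_comp[OF c h1 q] unfolding is_product_def by blast
  then show ?thesis using assms by metis
qed

lemma coproduct_initial_right:
  assumes c: "is_category C" and I: "initial C I" and e: "arr C e I B"
  shows "is_coproduct C B I B (Idt C B) e"
  unfolding is_coproduct_def
proof (intro conjI allI impI)
  show "arr C (Idt C B) B B" using cat_id[OF c cat_cod[OF c e]] .
  show "arr C e I B" by fact
  fix W f g assume f: "arr C f B W" and g: "arr C g I W"
  show "\<exists>!h. arr C h B W \<and> Comp C h (Idt C B) = f \<and> Comp C h e = g"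
  proof (rule ex1I[of _ f])
    show "arr C f B W \<and> Comp C f (Idt C B) = f \<and> Comp C f e = g"
      using f cat_idr[OF c f] initial_arr_unique[OF c I cat_comp[OF c e f] g] by auto
  qed (use cat_idr[OF c] in force)
qed

lemma coproduct_initial_left:
  assumes c: "is_category C" and I: "initial C I" and e: "arr C e I B"
  shows "is_coproduct C I B B e (Idt C B)"
  unfolding is_coproduct_def
proof (intro conjI allI impI)
  show "arr C (Idt C B) B B" using cat_id[OF c cat_cod[OF c e]] .
  show "arr C e I B" by fact
  fix W f g assume g: "arr C g B W" and f: "arr C f I W"
  show "\<exists>!h. arr C h B W \<and> Comp C h e = f \<and> Comp C h (Idt C B) = g"
  proof (rule ex1I[of _ g])
    show "arr C g B W \<and> Comp C g e = f \<and> Comp C g (Idt C B) = g"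
      using g cat_idr[OF c g] initial_arr_unique[OF c I cat_comp[OF c e g] f] by auto
  qed (use cat_idr[OF c] in force)
qed

lemma extensive_category: "extensive C \<Longrightarrow> is_category C"
  unfolding extensive_def by blast

lemma extensive_initial: "extensive C \<Longrightarrow> \<exists>I. initial C I"
  unfolding extensive_def has_finite_coproducts_def by blast

lemma extensive_ess_surj:
  "extensive C \<Longrightarrow> is_coproduct C X Y Z i j \<Longrightarrow> coprod_functor_ess_surj C X Y Z i j"
  unfolding extensive_def by blast

lemma extensive_full:
  assumes "extensive C" "is_coproduct C X Y Z iX iY"
    "arr C a A X" "arr C b B Y" "is_coproduct C A B W u v"
    "arr C c W Z" "Comp C c u = Comp C iX a" "Comp C c v = Comp C iY b"
    "arr C a' A' X" "arr C b' B' Y" "is_coproduct C A' B' W' u' v'"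
    "arr C c' W' Z" "Comp C c' u' = Comp C iX a'" "Comp C c' v' = Comp C iY b'"
    "arr C h W W'" "Comp C c' h = c"
  shows "\<exists>f g. arr C f A A' \<and> Comp C a' f = a \<and> arr C g B B' \<and> Comp C b' g = b \<and>
    Comp C h u = Comp C u' f \<and> Comp C h v = Comp C v' g"
proof -
  have "coprod_functor_fully_faithful C X Y Z iX iY"
    using assms(1,2) unfolding extensive_def by blast
  from this[unfolded coprod_functor_fully_faithful_def, rule_format, OF assms(3-)]
  show ?thesis by blast
qed

text \<open>Full faithfulness applied to the two decompositions \<open>V + 0\<close> and \<open>0 + V\<close> of \<open>V\<close> over
  \<open>0 + 0\<close> yields an arrow \<open>V \<rightarrow> 0\<close> splitting \<open>V \<rightarrow> 0 \<rightarrow> V\<close>.\<close>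

lemma extensive_initial_strict:
  assumes ext: "extensive C" and I: "initial C I" and f: "arr C f V I"
  shows "initial C V"
proof -
  have c: "is_category C" using extensive_category[OF ext] .
  have V: "V \<in> Ob C" using cat_dom[OF c f] .
  obtain e where e: "arr C e I V" using initial_arr_exists[OF I V] by blast
  have idI: "arr C (Idt C I) I I" using cat_id[OF c cat_cod[OF c f]] .
  have idV: "arr C (Idt C V) V V" using cat_id[OF c V] .
  have fe: "Comp C f e = Comp C (Idt C I) (Idt C I)"
    using initial_arr_unique[OF c I cat_comp[OF c e f] cat_comp[OF c idI idI]] .
  have fV: "Comp C f (Idt C V) = Comp C (Idt C I) f" using cat_idr[OF c f] cat_idl[OF c f] by simp
  obtain r where r: "arr C r V I" and er: "Comp C (Idt C V) (Idt C V) = Comp C e r"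
    using extensive_full[OF ext coproduct_initial_right[OF c I idI] f idI
        coproduct_initial_right[OF c I e] f fV fe idI f coproduct_initial_left[OF c I e]
        f fe fV idV cat_idr[OF c f]] by blast
  have idV_er: "Idt C V = Comp C e r" using er cat_idl[OF c idV] by simp
  show ?thesis unfolding initial_def
  proof (intro conjI ballI)
    show "V \<in> Ob C" by fact
    fix A assume A: "A \<in> Ob C"
    obtain eA where eA: "arr C eA I A" using initial_arr_exists[OF I A] by blast
    show "\<exists>!x. arr C x V A"
    proof (rule ex1I[of _ "Comp C eA r"])
      show "arr C (Comp C eA r) V A" using cat_comp[OF c r eA] .
      fix x assume x: "arr C x V A"
      have "x = Comp C x (Comp C e r)" using idV_er cat_idr[OF c x] by simp
      also have "\<dots> = Comp C (Comp C x e) r" using cat_assoc[OF c r e x] .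
      also have "Comp C x e = eA" using initial_arr_unique[OF c I cat_comp[OF c e x] eA] .
      finally show "x = Comp C eA r" .
    qed
  qed
qed

text \<open>Compare \<open>B = B + 0\<close> over \<open>X\<close> and \<open>0\<close> with \<open>Y = 0 + Y\<close> over \<open>0\<close> and \<open>Y\<close>: full
  faithfulness gives an arrow \<open>B \<rightarrow> 0\<close>.\<close>

lemma extensive_coproduct_disjoint:
  assumes ext: "extensive C" and cp: "is_coproduct C X Y Z i j"
    and \<alpha>: "arr C \<alpha> B X" and \<beta>: "arr C \<beta> B Y" and eq: "Comp C i \<alpha> = Comp C j \<beta>"
  shows "initial C B"
proof -
  have c: "is_category C" using extensive_category[OF ext] .
  obtain I where I: "initial C I" using extensive_initial[OF ext] by blast
  have i: "arr C i X Z" and j: "arr C j Y Z" using cp unfolding is_coproduct_def by auto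
  obtain eB where eB: "arr C eB I B" using initial_arr_exists[OF I cat_dom[OF c \<alpha>]] by blast
  obtain eX where eX: "arr C eX I X" using initial_arr_exists[OF I cat_cod[OF c \<alpha>]] by blast
  obtain eY where eY: "arr C eY I Y" using initial_arr_exists[OF I cat_cod[OF c \<beta>]] by blast
  have i\<alpha>: "arr C (Comp C i \<alpha>) B Z" using cat_comp[OF c \<alpha> i] .
  have e2: "Comp C (Comp C i \<alpha>) eB = Comp C j eY"
    using initial_arr_unique[OF c I cat_comp[OF c eB i\<alpha>] cat_comp[OF c eY j]] .
  have e3: "Comp C j eY = Comp C i eX"
    using initial_arr_unique[OF c I cat_comp[OF c eY j] cat_comp[OF c eX i]] .
  obtain r where "arr C r B I"
    using extensive_full[OF ext cp \<alpha> eY coproduct_initial_right[OF c I eB] i\<alpha> cat_idr[OF c i\<alpha>] e2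
        eX cat_id[OF c cat_cod[OF c \<beta>]] coproduct_initial_left[OF c I eY] j e3 refl \<beta> eq[symmetric]]
    by blast
  then show ?thesis by (rule extensive_initial_strict[OF ext I])
qed

text \<open>Decompose \<open>T\<close> as \<open>A + B\<close> over the coproduct \<open>X + Y\<close> along \<open>k\<close>; the hypothesis makes
  \<open>B\<close> initial, so \<open>k\<close> factors through the first injection.\<close>

lemma extensive_factor_through_coprod_inj:
  assumes ext: "extensive C" and cp: "is_coproduct C X Y Z i j" and k: "arr C k T Z"
    and empty: "\<And>B z b. arr C z B T \<Longrightarrow> arr C b B Y \<Longrightarrow> Comp C k z = Comp C j b \<Longrightarrow> initial C B"
  obtains t where "arr C t T X" "k = Comp C i t"
proof -
  have c: "is_category C" using extensive_category[OF ext] .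
  have i: "arr C i X Z" using cp unfolding is_coproduct_def by auto
  obtain A B a b V u v c' s where a: "arr C a A X" and b: "arr C b B Y"
    and cpAB: "is_coproduct C A B V u v" and c': "arr C c' V Z"
    and c'u: "Comp C c' u = Comp C i a" and c'v: "Comp C c' v = Comp C j b"
    and s_iso: "iso C s V T" and ks: "Comp C k s = c'"
    using extensive_ess_surj[OF ext cp, unfolded coprod_functor_ess_surj_def, rule_format, OF k]
    by blast
  obtain s' where s: "arr C s V T" and s': "arr C s' T V" and ss': "Comp C s s' = Idt C T"
    using s_iso unfolding iso_def by blast
  have u: "arr C u A V" and v: "arr C v B V" using cpAB unfolding is_coproduct_def by auto
  have "Comp C k (Comp C s v) = Comp C j b"
    using cat_assoc[OF c v s k] ks c'v by simp
  then have B: "initial C B" using empty[OF cat_comp[OF c v s] b] by blast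
  obtain eBX where eBX: "arr C eBX B X"
    using initial_arr_exists[OF B cat_dom[OF c i]] by blast
  obtain w where w: "arr C w V X" "Comp C w u = a" "Comp C w v = eBX"
    using cpAB a eBX unfolding is_coproduct_def by blast
  have iw: "arr C (Comp C i w) V Z" using cat_comp[OF c w(1) i] .
  have c'_iw: "c' = Comp C i w"
  proof (rule coproduct_arr_eqI[OF c cpAB c' iw])
    show "Comp C c' u = Comp C (Comp C i w) u"
      using c'u cat_assoc[OF c u w(1) i] w(2) by simp
    show "Comp C c' v = Comp C (Comp C i w) v"
      using initial_arr_unique[OF c B cat_comp[OF c v c'] cat_comp[OF c v iw]] .
  qed
  show ?thesis
  proof (rule that)
    show "arr C (Comp C w s') T X" using cat_comp[OF c s' w(1)] .
    have "k = Comp C k (Comp C s s')" using ss' cat_idr[OF c k] by simp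
    also have "\<dots> = Comp C (Comp C i w) s'" using cat_assoc[OF c s' s k] ks c'_iw by simp
    also have "\<dots> = Comp C i (Comp C w s')" using cat_assoc[OF c s' w(1) i] by simp
    finally show "k = Comp C i (Comp C w s')" .
  qed
qed

lemma functor_ob: "is_functor C D Fo Fa \<Longrightarrow> A \<in> Ob C \<Longrightarrow> Fo A \<in> Ob D"
  unfolding is_functor_def by blast

lemma functor_arr: "is_functor C D Fo Fa \<Longrightarrow> arr C f A B \<Longrightarrow> arr D (Fa f) (Fo A) (Fo B)"
  unfolding is_functor_def by blast

lemma functor_id: "is_functor C D Fo Fa \<Longrightarrow> A \<in> Ob C \<Longrightarrow> Fa (Idt C A) = Idt D (Fo A)"
  unfolding is_functor_def by blast

lemma functor_comp:
  "is_functor C D Fo Fa \<Longrightarrow> arr C f A B \<Longrightarrow> arr C g B F \<Longrightarrow>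
    Fa (Comp C g f) = Comp D (Fa g) (Fa f)"
  unfolding is_functor_def by blast

locale adjunction =
  fixes E :: "('o, 'a) category" and S :: "('p, 'b) category"
    and Lo :: "'o \<Rightarrow> 'p" and La :: "'a \<Rightarrow> 'b"
    and Ro :: "'p \<Rightarrow> 'o" and Ra :: "'b \<Rightarrow> 'a"
    and \<eta> :: "'o \<Rightarrow> 'a"
  assumes cat_E: "is_category E" and cat_S: "is_category S"
    and adj: "is_adjunction E S Lo La Ro Ra \<eta>"
begin

lemma functor_L: "is_functor E S Lo La"
  using adj unfolding is_adjunction_def by blast

lemma functor_R: "is_functor S E Ro Ra"
  using adj unfolding is_adjunction_def by blast

lemma unit_arr: "X \<in> Ob E \<Longrightarrow> arr E (\<eta> X) X (Ro (Lo X))"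
  using adj unfolding is_adjunction_def by blast

lemma unit_natural: "arr E f X Y \<Longrightarrow> Comp E (Ra (La f)) (\<eta> X) = Comp E (\<eta> Y) f"
  using adj unfolding is_adjunction_def by blast

lemma unit_universal:
  "X \<in> Ob E \<Longrightarrow> A \<in> Ob S \<Longrightarrow> arr E f X (Ro A) \<Longrightarrow>
    \<exists>!g. arr S g (Lo X) A \<and> Comp E (Ra g) (\<eta> X) = f"
  using adj unfolding is_adjunction_def by blast

lemma RL_arr: "arr E f X Y \<Longrightarrow> arr E (Ra (La f)) (Ro (Lo X)) (Ro (Lo Y))"
  using functor_arr[OF functor_R functor_arr[OF functor_L]] .

lemma RL_comp:
  assumes "arr E f X Y" "arr E g Y Z"
  shows "Comp E (Ra (La g)) (Ra (La f)) = Ra (La (Comp E g f))"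
  using functor_comp[OF functor_L assms] functor_comp[OF functor_R
      functor_arr[OF functor_L assms(1)] functor_arr[OF functor_L assms(2)]] by simp

lemma unit_natural_comp:
  assumes x: "arr E x T X" and f: "arr E f X Y"
  shows "Comp E (Ra (La f)) (Comp E (\<eta> X) x) = Comp E (\<eta> Y) (Comp E f x)"
proof -
  have X: "X \<in> Ob E" and Y: "Y \<in> Ob E" using cat_dom[OF cat_E f] cat_cod[OF cat_E f] by auto
  have "Comp E (Ra (La f)) (Comp E (\<eta> X) x) = Comp E (Comp E (Ra (La f)) (\<eta> X)) x"
    using cat_assoc[OF cat_E x unit_arr[OF X] RL_arr[OF f]] .
  also have "\<dots> = Comp E (Comp E (\<eta> Y) f) x" using unit_natural[OF f] by simp
  also have "\<dots> = Comp E (\<eta> Y) (Comp E f x)" using cat_assoc[OF cat_E x f unit_arr[OF Y]] by simp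
  finally show ?thesis .
qed

lemma transpose_unique:
  assumes g1: "arr S g1 (Lo X) A" and g2: "arr S g2 (Lo X) A" and X: "X \<in> Ob E"
    and eq: "Comp E (Ra g1) (\<eta> X) = Comp E (Ra g2) (\<eta> X)"
  shows "g1 = g2"
proof -
  have "arr E (Comp E (Ra g1) (\<eta> X)) X (Ro A)"
    using cat_comp[OF cat_E unit_arr[OF X] functor_arr[OF functor_R g1]] .
  then have "\<exists>!g. arr S g (Lo X) A \<and> Comp E (Ra g) (\<eta> X) = Comp E (Ra g1) (\<eta> X)"
    using unit_universal[OF X cat_cod[OF cat_S g1]] by blast
  then show ?thesis using g1 g2 eq by (metis (no_types, lifting))
qed

lemma transpose_precomp:
  assumes h: "arr S h (Lo Z) W" and i: "arr E i X Z"
  shows "Comp E (Comp E (Ra h) (\<eta> Z)) i = Comp E (Ra (Comp S h (La i))) (\<eta> X)"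
proof -
  have X: "X \<in> Ob E" and Z: "Z \<in> Ob E" using cat_dom[OF cat_E i] cat_cod[OF cat_E i] by auto
  have Li: "arr S (La i) (Lo X) (Lo Z)" using functor_arr[OF functor_L i] .
  have Rh: "arr E (Ra h) (Ro (Lo Z)) (Ro W)" using functor_arr[OF functor_R h] .
  have "Comp E (Comp E (Ra h) (\<eta> Z)) i = Comp E (Ra h) (Comp E (\<eta> Z) i)"
    using cat_assoc[OF cat_E i unit_arr[OF Z] Rh] by simp
  also have "\<dots> = Comp E (Ra h) (Comp E (Ra (La i)) (\<eta> X))" using unit_natural[OF i] by simp
  also have "\<dots> = Comp E (Comp E (Ra h) (Ra (La i))) (\<eta> X)"
    using cat_assoc[OF cat_E unit_arr[OF X] RL_arr[OF i] Rh] .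
  also have "\<dots> = Comp E (Ra (Comp S h (La i))) (\<eta> X)"
    using functor_comp[OF functor_R Li h] by simp
  finally show ?thesis .
qed

lemma transpose_postcomp:
  assumes a: "arr S a (Lo T) A" and f: "arr S f A B" and T: "T \<in> Ob E"
  shows "Comp E (Ra (Comp S f a)) (\<eta> T) = Comp E (Ra f) (Comp E (Ra a) (\<eta> T))"
  using functor_comp[OF functor_R a f]
    cat_assoc[OF cat_E unit_arr[OF T] functor_arr[OF functor_R a] functor_arr[OF functor_R f]]
  by simp

lemma left_adjoint_preserves_coproduct:
  assumes cp: "is_coproduct E X Y Z i j"
  shows "is_coproduct S (Lo X) (Lo Y) (Lo Z) (La i) (La j)"
  unfolding is_coproduct_def
proof (intro conjI allI impI)
  have i: "arr E i X Z" and j: "arr E j Y Z" using cp unfolding is_coproduct_def by auto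
  have X: "X \<in> Ob E" and Y: "Y \<in> Ob E" and Z: "Z \<in> Ob E"
    using cat_dom[OF cat_E i] cat_dom[OF cat_E j] cat_cod[OF cat_E i] by auto
  show Li: "arr S (La i) (Lo X) (Lo Z)" using functor_arr[OF functor_L i] .
  show Lj: "arr S (La j) (Lo Y) (Lo Z)" using functor_arr[OF functor_L j] .
  fix W f g assume f: "arr S f (Lo X) W" and g: "arr S g (Lo Y) W"
  have W: "W \<in> Ob S" using cat_cod[OF cat_S f] .
  define f' where "f' = Comp E (Ra f) (\<eta> X)"
  define g' where "g' = Comp E (Ra g) (\<eta> Y)"
  have f': "arr E f' X (Ro W)"
    unfolding f'_def using cat_comp[OF cat_E unit_arr[OF X] functor_arr[OF functor_R f]] .
  have g': "arr E g' Y (Ro W)"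
    unfolding g'_def using cat_comp[OF cat_E unit_arr[OF Y] functor_arr[OF functor_R g]] .
  obtain m where m: "arr E m Z (Ro W)" "Comp E m i = f'" "Comp E m j = g'"
    using cp f' g' unfolding is_coproduct_def by blast
  obtain h where h: "arr S h (Lo Z) W" "Comp E (Ra h) (\<eta> Z) = m"
    using unit_universal[OF Z W m(1)] by blast
  show "\<exists>!h. arr S h (Lo Z) W \<and> Comp S h (La i) = f \<and> Comp S h (La j) = g"
  proof (rule ex1I[of _ h], intro conjI)
    show "arr S h (Lo Z) W" by fact
    show "Comp S h (La i) = f"
      using transpose_unique[OF cat_comp[OF cat_S Li h(1)] f X] transpose_precomp[OF h(1) i]
        h(2) m(2) f'_def by simp
    show "Comp S h (La j) = g"
      using transpose_unique[OF cat_comp[OF cat_S Lj h(1)] g Y] transpose_precomp[OF h(1) j]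
        h(2) m(3) g'_def by simp
  next
    fix h' assume h': "arr S h' (Lo Z) W \<and> Comp S h' (La i) = f \<and> Comp S h' (La j) = g"
    have "arr E (Comp E (Ra h') (\<eta> Z)) Z (Ro W)"
      using cat_comp[OF cat_E unit_arr[OF Z] functor_arr[OF functor_R]] h' by blast
    then have "Comp E (Ra h') (\<eta> Z) = m"
      using coproduct_arr_eqI[OF cat_E cp _ m(1)] transpose_precomp[of h' Z W i X]
        transpose_precomp[of h' Z W j Y] h' i j m f'_def g'_def by simp
    then show "h' = h" using transpose_unique[of h' Z W h] h' h Z by simp
  qed
qed

text \<open>Transposing reduces this to the product \<open>L(X\<^sub>1 \<times> X\<^sub>2) = LX\<^sub>1 \<times> LX\<^sub>2\<close> in \<open>S\<close>.\<close>

lemma RL_product_projections_jointly_monic: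
  assumes pres: "preserves_finite_products E S Lo La" and pr: "is_product E X1 X2 P p q"
    and \<alpha>: "arr E \<alpha> T (Ro (Lo P))" and \<beta>: "arr E \<beta> T (Ro (Lo P))"
    and eqp: "Comp E (Ra (La p)) \<alpha> = Comp E (Ra (La p)) \<beta>"
    and eqq: "Comp E (Ra (La q)) \<alpha> = Comp E (Ra (La q)) \<beta>"
  shows "\<alpha> = \<beta>"
proof -
  have p: "arr E p P X1" and q: "arr E q P X2" using pr unfolding is_product_def by auto
  have T: "T \<in> Ob E" using cat_dom[OF cat_E \<alpha>] .
  have LP: "Lo P \<in> Ob S" using functor_ob[OF functor_L cat_dom[OF cat_E p]] .
  obtain a where a: "arr S a (Lo T) (Lo P)" "Comp E (Ra a) (\<eta> T) = \<alpha>"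
    using unit_universal[OF T LP \<alpha>] by blast
  obtain b where b: "arr S b (Lo T) (Lo P)" "Comp E (Ra b) (\<eta> T) = \<beta>"
    using unit_universal[OF T LP \<beta>] by blast
  have Lp: "arr S (La p) (Lo P) (Lo X1)" using functor_arr[OF functor_L p] .
  have Lq: "arr S (La q) (Lo P) (Lo X2)" using functor_arr[OF functor_L q] .
  have "Comp S (La p) a = Comp S (La p) b"
    using transpose_unique[OF cat_comp[OF cat_S a(1) Lp] cat_comp[OF cat_S b(1) Lp] T]
      transpose_postcomp[OF a(1) Lp T] transpose_postcomp[OF b(1) Lp T] a(2) b(2) eqp by simp
  moreover have "Comp S (La q) a = Comp S (La q) b"
    using transpose_unique[OF cat_comp[OF cat_S a(1) Lq] cat_comp[OF cat_S b(1) Lq] T]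
      transpose_postcomp[OF a(1) Lq T] transpose_postcomp[OF b(1) Lq T] a(2) b(2) eqq by simp
  moreover have "is_product S (Lo X1) (Lo X2) (Lo P) (La p) (La q)"
    using pres pr unfolding preserves_finite_products_def by blast
  ultimately have "a = b" using product_arr_eqI[OF cat_S _ a(1) b(1)] by blast
  then show ?thesis using a(2) b(2) by simp
qed

lemma unit_pairing_through_diagonal:
  assumes pres: "preserves_finite_products E S Lo La" and pr: "is_product E X X P p q"
    and d: "arr E d X P" and pd: "Comp E p d = Idt E X" and qd: "Comp E q d = Idt E X"
    and k: "arr E k T P" and eq: "Comp E (\<eta> X) (Comp E p k) = Comp E (\<eta> X) (Comp E q k)"
  shows "Comp E (\<eta> P) k = Comp E (Ra (La d)) (Comp E (\<eta> X) (Comp E p k))"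
proof -
  have p: "arr E p P X" and q: "arr E q P X" using pr unfolding is_product_def by auto
  have X: "X \<in> Ob E" using cat_cod[OF cat_E p] .
  have RLid: "Ra (La (Idt E X)) = Idt E (Ro (Lo X))"
    using functor_id[OF functor_L X] functor_id[OF functor_R functor_ob[OF functor_L X]] by simp
  define x where "x = Comp E (\<eta> X) (Comp E p k)"
  have x: "arr E x T (Ro (Lo X))"
    unfolding x_def using cat_comp[OF cat_E cat_comp[OF cat_E k p] unit_arr[OF X]] .
  have retract: "Comp E (Ra (La r)) (Comp E (Ra (La d)) x) = x"
    if r: "arr E r P X" and rd: "Comp E r d = Idt E X" for r
    using cat_assoc[OF cat_E x RL_arr[OF d] RL_arr[OF r]] RL_comp[OF d r] rd RLid cat_idl[OF cat_E x]
    by simp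
  show ?thesis
    unfolding x_def[symmetric]
  proof (rule RL_product_projections_jointly_monic[OF pres pr])
    show "arr E (Comp E (\<eta> P) k) T (Ro (Lo P))"
      using cat_comp[OF cat_E k unit_arr[OF cat_cod[OF cat_E k]]] .
    show "arr E (Comp E (Ra (La d)) x) T (Ro (Lo P))" using cat_comp[OF cat_E x RL_arr[OF d]] .
    show "Comp E (Ra (La p)) (Comp E (\<eta> P) k) = Comp E (Ra (La p)) (Comp E (Ra (La d)) x)"
      using unit_natural_comp[OF k p] retract[OF p pd] x_def by simp
    show "Comp E (Ra (La q)) (Comp E (\<eta> P) k) = Comp E (Ra (La q)) (Comp E (Ra (La d)) x)"
      using unit_natural_comp[OF k q] retract[OF q qd] x_def eq by simp
  qed
qed

lemma unit_mono_if_decidable: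
  assumes ext: "extensive E" and pres_prod: "preserves_finite_products E S Lo La"
    and pres_coprod: "preserves_finite_coproducts S E Ro Ra"
    and dec: "decidable_obj E X"
  shows "mono E (\<eta> X) X (Ro (Lo X))"
  unfolding mono_def
proof (intro conjI allI impI)
  obtain P p q d where X: "X \<in> Ob E" and pr: "is_product E X X P p q" and d: "arr E d X P"
    and pd: "Comp E p d = Idt E X" and qd: "Comp E q d = Idt E X" and sm: "summand E d X P"
    using dec unfolding decidable_obj_def by blast
  obtain Y n where cp: "is_coproduct E X Y P d n" using sm unfolding summand_def by blast
  have p: "arr E p P X" and q: "arr E q P X" using pr unfolding is_product_def by auto
  have n: "arr E n Y P" using cp unfolding is_coproduct_def by auto
  have RL_cp: "is_coproduct E (Ro (Lo X)) (Ro (Lo Y)) (Ro (Lo P)) (Ra (La d)) (Ra (La n))"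
    using pres_coprod left_adjoint_preserves_coproduct[OF cp]
    unfolding preserves_finite_coproducts_def by blast
  show "arr E (\<eta> X) X (Ro (Lo X))" using unit_arr[OF X] .
  fix T g h assume g: "arr E g T X" and h: "arr E h T X"
    and eq: "Comp E (\<eta> X) g = Comp E (\<eta> X) h"
  obtain k where k: "arr E k T P" "Comp E p k = g" "Comp E q k = h"
    using pr g h unfolding is_product_def by blast
  have \<eta>k: "Comp E (\<eta> P) k = Comp E (Ra (La d)) (Comp E (\<eta> X) g)"
    using unit_pairing_through_diagonal[OF pres_prod pr d pd qd k(1)] k eq by simp
  obtain t where t: "arr E t T X" and kt: "k = Comp E d t"
  proof (rule extensive_factor_through_coprod_inj[OF ext cp k(1)])
    fix B z b assume z: "arr E z B T" and b: "arr E b B Y" and kz: "Comp E k z = Comp E n b"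
    have \<eta>g: "arr E (Comp E (\<eta> X) g) T (Ro (Lo X))" using cat_comp[OF cat_E g unit_arr[OF X]] .
    have "Comp E (Ra (La d)) (Comp E (Comp E (\<eta> X) g) z)
        = Comp E (Comp E (\<eta> P) k) z"
      using cat_assoc[OF cat_E z \<eta>g RL_arr[OF d]] \<eta>k by simp
    also have "\<dots> = Comp E (\<eta> P) (Comp E n b)"
      using cat_assoc[OF cat_E z k(1) unit_arr[OF cat_cod[OF cat_E n]]] kz by simp
    also have "\<dots> = Comp E (Ra (La n)) (Comp E (\<eta> Y) b)"
      using unit_natural_comp[OF b n] by simp
    finally show "initial E B"
      using extensive_coproduct_disjoint[OF ext RL_cp cat_comp[OF cat_E z \<eta>g]
          cat_comp[OF cat_E b unit_arr[OF cat_dom[OF cat_E n]]]] by blast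
  qed
  have "g = t" using k(2) kt cat_assoc[OF cat_E t d p] pd cat_idl[OF cat_E t] by simp
  moreover have "h = t" using k(3) kt cat_assoc[OF cat_E t d q] qd cat_idl[OF cat_E t] by simp
  ultimately show "g = h" by simp
qed

end

theorem proposition2p8:
  fixes E :: "('o, 'a) category" and S :: "('p, 'b) category"
    and Lo :: "'o \<Rightarrow> 'p" and La :: "'a \<Rightarrow> 'b"
    and Ro :: "'p \<Rightarrow> 'o" and Ra :: "'b \<Rightarrow> 'a"
    and \<eta> :: "'o \<Rightarrow> 'a"
  assumes "extensive E" and "has_finite_products E"
    and "extensive S" and "has_finite_products S"
    and "is_functor S E Ro Ra" and "preserves_finite_coproducts S E Ro Ra"
    and "is_adjunction E S Lo La Ro Ra \<eta>"
    and "preserves_finite_products E S Lo La"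
    and "closed_under_subobjects E S Lo Ro \<eta>"
    and "decidable_obj E X"
  shows "iso E (\<eta> X) X (Ro (Lo X))"
proof -
  interpret adjunction E S Lo La Ro Ra \<eta>
    using extensive_category[OF assms(1)] extensive_category[OF assms(3)] assms(7)
    by unfold_locales
  have X: "X \<in> Ob E" using assms(10) unfolding decidable_obj_def by blast
  have "mono E (\<eta> X) X (Ro (Lo X))"
    using unit_mono_if_decidable[OF assms(1,8,6,10)] .
  then show ?thesis
    using assms(9) functor_ob[OF functor_L X] unfolding closed_under_subobjects_def by blast
qed

end
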